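(* Let $g:\mathbb{R}^d\to[0,\infty)$ be a log-concave product density, i.e. $g(z)=\prod_{i=1}^d g_i(z_i)$ where each $g_i:\mathbb{R}\to[0,\infty)$ is log-concave and integrable, with $g$ not identically zero. Let $f:\mathbb{R}^d\to(0,\infty)$ be integrable and log-supermodular. Then $f*g$ is log-supermodular: for all $x,y\in\mathbb{R}^d$, \[ (f*g)(x)\,(f*g)(y)\le (f*g)(x\wedge y)\,(f*g)(x\vee y). \]
   Context: For $x,y\in\mathbb{R}^d$, $(x\wedge y)_i=\min(x_i,y_i)$ and $(x\vee y)_i=\max(x_i,y_i)$. A function $u$ on $\mathbb{R}^d$ is log-supermodular if $u(x)u(y)\le u(x\wedge y)u(x\vee y)$ for all $x,y$. A function $h$ is log-concave if $h((1-t)x+ty)\ge h(x)^{1-t}h(y)^t$ for all $x,y$ and $t\in(0,1)$. Convolution: $f*g(x)=\int_{\mathbb{R}^d} f(x-z)g(z)\,dz$. *)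

theory Defs
  imports "HOL-Analysis.Analysis"
begin

definition vmin :: "real^'n \<Rightarrow> real^'n \<Rightarrow> real^'n" where
  "vmin x y = (\<chi> i. min (x $ i) (y $ i))"

definition vmax :: "real^'n \<Rightarrow> real^'n \<Rightarrow> real^'n" where
  "vmax x y = (\<chi> i. max (x $ i) (y $ i))"

definition log_supermodular :: "(real^'n \<Rightarrow> real) \<Rightarrow> bool" where
  "log_supermodular u \<longleftrightarrow> (\<forall>x y. u x * u y \<le> u (vmin x y) * u (vmax x y))"

definition log_concave :: "('a::real_vector \<Rightarrow> real) \<Rightarrow> bool" where
  "log_concave h \<longleftrightarrow> (\<forall>x y t. 0 < t \<and> t < 1 \<longrightarrow>
      h ((1 - t) *\<^sub>R x + t *\<^sub>R y) \<ge> h x powr (1 - t) * h y powr t)"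

definition conv :: "(real^'n \<Rightarrow> real) \<Rightarrow> (real^'n \<Rightarrow> real) \<Rightarrow> real^'n \<Rightarrow> real" where
  "conv f g x = (\<integral>z. f (x - z) * g z \<partial>lborel)"

end

theory Submission
  imports Defs
begin

text \<open>
  The engine is the Ahlswede--Daykin four functions theorem: if
  \<open>h\<^sub>1 z * h\<^sub>2 w \<le> h\<^sub>3 (z \<and> w) * h\<^sub>4 (z \<or> w)\<close> pointwise, then
  \<open>\<integral>h\<^sub>1 * \<integral>h\<^sub>2 \<le> \<integral>h\<^sub>3 * \<integral>h\<^sub>4\<close>. On a line this follows by integrating the symmetrized
  pointwise inequality over pairs \<open>(s, t)\<close>, and on \<open>\<real>\<^sup>d\<close> by induction over the coordinates
  with Tonelli. It is applied to \<open>w \<mapsto> f w * g (x - w)\<close> and the three analogous integrands at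
  \<open>y\<close>, \<open>x \<and> y\<close>, \<open>x \<or> y\<close>: the hypothesis is the log-supermodularity of \<open>f\<close> times that of
  the kernel \<open>(x, z) \<mapsto> g (x - z)\<close>, which for a product density reduces coordinatewise to
  \<open>h (a - u) * h (b - v) \<le> h (a \<and> b - u \<and> v) * h (a \<or> b - u \<or> v)\<close> for log-concave \<open>h\<close>.
  Finally, an integrable log-concave function is bounded, so the convolution integrals are finite
  and the inequality between nonnegative integrals transfers to the real-valued convolution.
\<close>

lemma add_le_add_of_mult_le_mult:
  fixes a b c d :: real
  assumes "0 \<le> a" "0 \<le> b" "0 \<le> d" "a \<le> c" "b \<le> c" "a * b \<le> c * d"
  shows "a + b \<le> c + d"
proof (cases "c = 0")
  case True
  then show ?thesis using assms by simp
next
  case False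
  then have "0 < c" using assms by simp
  have "0 \<le> (c - a) * (c - b)" using assms by simp
  then have "c * (a + b) \<le> c * (c + d)" using assms by (simp add: algebra_simps)
  then show ?thesis using \<open>0 < c\<close> by simp
qed

lemma ennreal_add_le_add_of_mult_le_mult:
  fixes a b c d :: ennreal
  assumes "a \<le> c" "b \<le> c" "a * b \<le> c * d"
  shows "a + b \<le> c + d"
proof (cases "c = \<infinity> \<or> d = \<infinity>")
  case True
  then show ?thesis by auto
next
  case False
  then obtain c' d' where cd: "c = ennreal c'" "d = ennreal d'" "0 \<le> c'" "0 \<le> d'"
    by (cases c; cases d) auto
  have "a < \<infinity>" "b < \<infinity>"
    using assms(1,2) cd by (auto intro: le_less_trans)
  then obtain a' b' where ab: "a = ennreal a'" "b = ennreal b'" "0 \<le> a'" "0 \<le> b'"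
    by (cases a; cases b) auto
  have "a' + b' \<le> c' + d'"
    using assms ab cd by (intro add_le_add_of_mult_le_mult) (auto simp: ennreal_mult'[symmetric])
  then show ?thesis using ab cd by (simp add: ennreal_plus[symmetric] del: ennreal_plus)
qed

lemma nn_integral_symmetrized_product:
  assumes [measurable]: "p \<in> borel_measurable M" "q \<in> borel_measurable M"
  shows "(\<integral>\<^sup>+s. (\<integral>\<^sup>+t. p s * q t + p t * q s \<partial>M) \<partial>M) = 2 * ((\<integral>\<^sup>+s. p s \<partial>M) * (\<integral>\<^sup>+t. q t \<partial>M))"
proof -
  have "(\<integral>\<^sup>+s. (\<integral>\<^sup>+t. p s * q t + p t * q s \<partial>M) \<partial>M)
      = (\<integral>\<^sup>+s. p s * (\<integral>\<^sup>+t. q t \<partial>M) + q s * (\<integral>\<^sup>+t. p t \<partial>M) \<partial>M)"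
    by (intro nn_integral_cong) (simp add: nn_integral_add nn_integral_cmult nn_integral_multc ac_simps)
  also have "\<dots> = (\<integral>\<^sup>+s. p s \<partial>M) * (\<integral>\<^sup>+t. q t \<partial>M) + (\<integral>\<^sup>+s. q s \<partial>M) * (\<integral>\<^sup>+t. p t \<partial>M)"
    by (simp add: nn_integral_add nn_integral_multc)
  finally show ?thesis by (simp add: mult_2 mult.commute)
qed

lemma four_functions_nn_integral:
  fixes a b c d :: "'a::linorder \<Rightarrow> ennreal"
  assumes [measurable]: "a \<in> borel_measurable M" "b \<in> borel_measurable M"
    "c \<in> borel_measurable M" "d \<in> borel_measurable M"
    and abcd: "\<And>s t. s \<in> space M \<Longrightarrow> t \<in> space M \<Longrightarrow> a s * b t \<le> c (min s t) * d (max s t)"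
  shows "(\<integral>\<^sup>+s. a s \<partial>M) * (\<integral>\<^sup>+t. b t \<partial>M) \<le> (\<integral>\<^sup>+s. c s \<partial>M) * (\<integral>\<^sup>+t. d t \<partial>M)"
proof -
  have ordered: "a s * b t + a t * b s \<le> c s * d t + c t * d s"
    if "s \<in> space M" "t \<in> space M" "s \<le> t" for s t
  proof (rule ennreal_add_le_add_of_mult_le_mult)
    have "min s t = s" "max s t = t" "min t s = s" "max t s = t"
      using \<open>s \<le> t\<close> by auto
    then show "a s * b t \<le> c s * d t" "a t * b s \<le> c s * d t"
      using abcd[of s t] abcd[of t s] that by simp_all
    have "a s * b t * (a t * b s) = (a s * b s) * (a t * b t)" by (simp add: ac_simps)
    also have "\<dots> \<le> (c s * d s) * (c t * d t)"
      using abcd[of s s] abcd[of t t] that by (simp add: mult_mono)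
    also have "\<dots> = c s * d t * (c t * d s)" by (simp add: ac_simps)
    finally show "a s * b t * (a t * b s) \<le> c s * d t * (c t * d s)" .
  qed
  have symmetrized: "a s * b t + a t * b s \<le> c s * d t + c t * d s"
    if "s \<in> space M" "t \<in> space M" for s t
    using ordered[OF that] ordered[OF that(2,1)] by (cases "s \<le> t") (auto simp: add.commute)
  have "2 * ((\<integral>\<^sup>+s. a s \<partial>M) * (\<integral>\<^sup>+t. b t \<partial>M))
      = (\<integral>\<^sup>+s. (\<integral>\<^sup>+t. a s * b t + a t * b s \<partial>M) \<partial>M)"
    by (simp add: nn_integral_symmetrized_product)
  also have "\<dots> \<le> (\<integral>\<^sup>+s. (\<integral>\<^sup>+t. c s * d t + c t * d s \<partial>M) \<partial>M)"
    by (intro nn_integral_mono symmetrized)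
  also have "\<dots> = 2 * ((\<integral>\<^sup>+s. c s \<partial>M) * (\<integral>\<^sup>+t. d t \<partial>M))"
    by (simp add: nn_integral_symmetrized_product)
  finally show ?thesis by (subst (asm) ennreal_mult_le_mult_iff) auto
qed

lemma min_max_in_space_PiM:
  fixes z w :: "'i \<Rightarrow> 'a::linorder"
  assumes "z \<in> space (Pi\<^sub>M I M)" "w \<in> space (Pi\<^sub>M I M)"
  shows "(\<lambda>i. min (z i) (w i)) \<in> space (Pi\<^sub>M I M)" "(\<lambda>i. max (z i) (w i)) \<in> space (Pi\<^sub>M I M)"
  using assms by (auto simp: space_PiM PiE_def extensional_def min_def max_def)

lemma four_functions_PiM:
  fixes h1 h2 h3 h4 :: "('i \<Rightarrow> 'a::linorder) \<Rightarrow> ennreal"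
  assumes "product_sigma_finite M" "finite I"
    and "h1 \<in> borel_measurable (Pi\<^sub>M I M)" "h2 \<in> borel_measurable (Pi\<^sub>M I M)"
      "h3 \<in> borel_measurable (Pi\<^sub>M I M)" "h4 \<in> borel_measurable (Pi\<^sub>M I M)"
    and "\<And>z w. z \<in> space (Pi\<^sub>M I M) \<Longrightarrow> w \<in> space (Pi\<^sub>M I M) \<Longrightarrow>
      h1 z * h2 w \<le> h3 (\<lambda>i. min (z i) (w i)) * h4 (\<lambda>i. max (z i) (w i))"
  shows "integral\<^sup>N (Pi\<^sub>M I M) h1 * integral\<^sup>N (Pi\<^sub>M I M) h2
    \<le> integral\<^sup>N (Pi\<^sub>M I M) h3 * integral\<^sup>N (Pi\<^sub>M I M) h4"
proof -
  interpret product_sigma_finite M by fact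
  show ?thesis
    using assms(2-)
  proof (induction I arbitrary: h1 h2 h3 h4 rule: finite_induct)
    case empty
    have point: "(\<lambda>_. undefined) \<in> space (Pi\<^sub>M {} M)"
      by (simp add: PiM_empty)
    show ?case
      using empty.prems(5)[OF point point] by (simp add: nn_integral_empty)
  next
    case (insert i I)
    let ?slice = "\<lambda>h x. \<integral>\<^sup>+y. h (x(i := y)) \<partial>M i"
    have slice_measurable: "?slice h \<in> borel_measurable (Pi\<^sub>M I M)"
      if [measurable]: "h \<in> borel_measurable (Pi\<^sub>M (insert i I) M)" for h
      by measurable
    have "integral\<^sup>N (Pi\<^sub>M I M) (?slice h1) * integral\<^sup>N (Pi\<^sub>M I M) (?slice h2)
      \<le> integral\<^sup>N (Pi\<^sub>M I M) (?slice h3) * integral\<^sup>N (Pi\<^sub>M I M) (?slice h4)"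
    proof (rule insert.IH[OF slice_measurable slice_measurable slice_measurable slice_measurable])
      fix z w assume zw: "z \<in> space (Pi\<^sub>M I M)" "w \<in> space (Pi\<^sub>M I M)"
      show "?slice h1 z * ?slice h2 w \<le> ?slice h3 (\<lambda>j. min (z j) (w j)) * ?slice h4 (\<lambda>j. max (z j) (w j))"
      proof (rule four_functions_nn_integral)
        fix s t assume "s \<in> space (M i)" "t \<in> space (M i)"
        then have "z(i := s) \<in> space (Pi\<^sub>M (insert i I) M)" "w(i := t) \<in> space (Pi\<^sub>M (insert i I) M)"
          using zw by (simp_all add: space_PiM PiE_fun_upd)
        moreover have "(\<lambda>j. min ((z(i := s)) j) ((w(i := t)) j)) = (\<lambda>j. min (z j) (w j))(i := min s t)"
          "(\<lambda>j. max ((z(i := s)) j) ((w(i := t)) j)) = (\<lambda>j. max (z j) (w j))(i := max s t)"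
          by auto
        ultimately show "h1 (z(i := s)) * h2 (w(i := t))
          \<le> h3 ((\<lambda>j. min (z j) (w j))(i := min s t)) * h4 ((\<lambda>j. max (z j) (w j))(i := max s t))"
          using insert.prems(5) by metis
      qed (use zw min_max_in_space_PiM[OF zw] insert in simp_all)
    qed (use insert in simp_all)
    then show ?case
      using insert by (simp add: product_nn_integral_insert)
  qed
qed

lemma vec_nth_sum_Basis: "(\<Sum>b\<in>Basis. f b *\<^sub>R b :: real^'n) $ i = f (axis i 1)"
proof -
  have "(\<Sum>b\<in>Basis. f b *\<^sub>R b :: real^'n) $ i = (\<Sum>b\<in>Basis. f b * (b \<bullet> axis i 1))"
    by (simp add: cart_eq_inner_axis inner_sum_left)
  also have "\<dots> = (\<Sum>b\<in>Basis. if b = axis i 1 then f b else 0)"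
    by (intro sum.cong refl) (auto simp: inner_Basis)
  finally show ?thesis by simp
qed

lemma four_functions_lborel_vec:
  fixes h1 h2 h3 h4 :: "real^'n \<Rightarrow> ennreal"
  assumes "h1 \<in> borel_measurable borel" "h2 \<in> borel_measurable borel"
    "h3 \<in> borel_measurable borel" "h4 \<in> borel_measurable borel"
    and "\<And>z w. h1 z * h2 w \<le> h3 (vmin z w) * h4 (vmax z w)"
  shows "integral\<^sup>N lborel h1 * integral\<^sup>N lborel h2 \<le> integral\<^sup>N lborel h3 * integral\<^sup>N lborel h4"
proof -
  let ?E = "\<lambda>f. \<Sum>b\<in>Basis. f b *\<^sub>R b :: real^'n"
  have coordinates: "integral\<^sup>N lborel h = (\<integral>\<^sup>+f. h (?E f) \<partial>(\<Pi>\<^sub>M b\<in>Basis. lborel))"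
    if [measurable]: "h \<in> borel_measurable borel" for h :: "real^'n \<Rightarrow> ennreal"
    by (subst lborel_eq) (simp add: nn_integral_distr)
  have min_max: "vmin (?E z) (?E w) = ?E (\<lambda>b. min (z b) (w b))" "vmax (?E z) (?E w) = ?E (\<lambda>b. max (z b) (w b))"
    for z w
    by (simp_all only: vec_eq_iff vmin_def vmax_def vec_lambda_beta vec_nth_sum_Basis) simp_all
  have "product_sigma_finite (\<lambda>_. lborel :: real measure)"
    by standard
  then show ?thesis
    unfolding coordinates[OF assms(1)] coordinates[OF assms(2)] coordinates[OF assms(3)] coordinates[OF assms(4)]
    using assms by (intro four_functions_PiM) (auto simp: min_max[symmetric])
qed

lemma nn_integral_lborel_reflect:
  fixes F :: "'a::euclidean_space \<Rightarrow> ennreal"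
  assumes [measurable]: "F \<in> borel_measurable borel"
  shows "(\<integral>\<^sup>+z. F z \<partial>lborel) = (\<integral>\<^sup>+w. F (u - w) \<partial>lborel)"
proof -
  have "lborel = distr lborel borel (\<lambda>w. u + (-1::real) *\<^sub>R w)"
    using lborel_affine[of "-1::real" u] by (simp add: density_1)
  then have "(\<integral>\<^sup>+z. F z \<partial>lborel) = (\<integral>\<^sup>+z. F z \<partial>distr lborel borel (\<lambda>w. u + (-1::real) *\<^sub>R w))"
    by simp
  then show ?thesis
    by (simp add: nn_integral_distr)
qed

lemma log_concaveD:
  assumes "log_concave h" "0 < t" "t < 1"
  shows "h x powr (1 - t) * h y powr t \<le> h ((1 - t) *\<^sub>R x + t *\<^sub>R y)"
  using assms unfolding log_concave_def by blast

lemma log_concave_mult_le_mult: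
  fixes h :: "'a::real_vector \<Rightarrow> real"
  assumes "log_concave h" "\<And>x. 0 \<le> h x" "0 \<le> t" "t \<le> 1"
  shows "h x * h y \<le> h ((1 - t) *\<^sub>R x + t *\<^sub>R y) * h (t *\<^sub>R x + (1 - t) *\<^sub>R y)"
proof (cases "t = 0 \<or> t = 1")
  case True
  then show ?thesis by (auto simp: mult.commute)
next
  case False
  with assms(3,4) have t: "0 < t" "t < 1" by auto
  have "h x powr (1 - t) * h x powr t = h x" "h y powr t * h y powr (1 - t) = h y"
    using assms(2)[of x] assms(2)[of y] by (simp_all add: powr_add[symmetric])
  then have "h x * h y = (h x powr (1 - t) * h y powr t) * (h x powr t * h y powr (1 - t))"
    by (metis mult.assoc mult.left_commute)
  also have "\<dots> \<le> h ((1 - t) *\<^sub>R x + t *\<^sub>R y) * h (t *\<^sub>R x + (1 - t) *\<^sub>R y)"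
    using log_concaveD[OF assms(1) t] log_concaveD[OF assms(1), of "1 - t" x y] t assms(2)
    by (intro mult_mono) auto
  finally show ?thesis .
qed

lemma log_concave_mult_le_min_max:
  fixes h :: "real \<Rightarrow> real"
  assumes "log_concave h" "\<And>x. 0 \<le> h x"
  shows "h (a - u) * h (b - v) \<le> h (min a b - min u v) * h (max a b - max u v)"
proof -
  have ordered: "h (a - u) * h (b - v) \<le> h (min a b - min u v) * h (max a b - max u v)"
    if "a \<le> b" for a b u v
  proof (cases "u \<le> v")
    case True
    then show ?thesis using that by simp
  next
    case False
    define t where "t = (u - v) / ((b - v) - (a - u))"
    have t: "0 \<le> t" "t \<le> 1" "t * ((b - v) - (a - u)) = u - v"
      using False that by (auto simp: t_def field_simps)
    have "(1 - t) *\<^sub>R (a - u) + t *\<^sub>R (b - v) = a - v" "t *\<^sub>R (a - u) + (1 - t) *\<^sub>R (b - v) = b - u"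
      using t(3) by (simp_all add: algebra_simps)
    then show ?thesis
      using log_concave_mult_le_mult[OF assms t(1,2), of "a - u" "b - v"] False that by simp
  qed
  show ?thesis
  proof (cases "a \<le> b")
    case True
    then show ?thesis by (rule ordered)
  next
    case False
    then show ?thesis
      using ordered[of b a v u] by (simp add: mult.commute min.commute max.commute)
  qed
qed

lemma log_concave_min_le:
  fixes h :: "'a::real_vector \<Rightarrow> real"
  assumes "log_concave h" "\<And>x. 0 \<le> h x" "0 \<le> t" "t \<le> 1"
  shows "min (h x) (h y) \<le> h ((1 - t) *\<^sub>R x + t *\<^sub>R y)"
proof (cases "t = 0 \<or> t = 1")
  case True
  then show ?thesis by auto
next
  case False
  with assms(3,4) have t: "0 < t" "t < 1" by auto
  have "min (h x) (h y) = min (h x) (h y) powr (1 - t) * min (h x) (h y) powr t"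
    using assms(2)[of x] assms(2)[of y] by (simp add: powr_add[symmetric])
  also have "\<dots> \<le> h x powr (1 - t) * h y powr t"
    using t assms(2) by (intro mult_mono powr_mono2) auto
  also have "\<dots> \<le> h ((1 - t) *\<^sub>R x + t *\<^sub>R y)"
    using log_concaveD[OF assms(1) t] .
  finally show ?thesis .
qed

lemma log_concave_midpoint_ge_sqrt:
  fixes h :: "'a::real_vector \<Rightarrow> real"
  assumes "log_concave h" "\<And>x. 0 \<le> h x"
  shows "sqrt (h x * h y) \<le> h (midpoint x y)"
proof -
  have "sqrt (h x * h y) = h x powr (1 - 1/2) * h y powr (1/2)"
    using assms(2)[of x] assms(2)[of y] by (simp add: powr_half_sqrt real_sqrt_mult)
  also have "\<dots> \<le> h ((1 - 1/2) *\<^sub>R x + (1/2) *\<^sub>R y)"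
    by (rule log_concaveD[OF assms(1)]) auto
  finally show ?thesis
    by (simp add: midpoint_def scaleR_add_right)
qed

lemma log_concave_integral_lower_bound:
  fixes h :: "real \<Rightarrow> real"
  assumes "log_concave h" "\<And>x. 0 \<le> h x" "integrable lborel h"
    and "0 \<le> c" "c \<le> h p" "c \<le> h q"
  shows "sqrt (c * h q) * \<bar>q - p\<bar> / 2 \<le> integral\<^sup>L lborel h"
proof -
  define m where "m = midpoint p q"
  define S where "S = {min m q .. max m q}"
  have above: "sqrt (c * h q) \<le> h z" if "z \<in> S" for z
  proof -
    have "z \<in> closed_segment m q"
      using \<open>z \<in> S\<close> by (auto simp: S_def closed_segment_eq_real_ivl min_def max_def)
    then obtain t where t: "0 \<le> t" "t \<le> 1" "z = (1 - t) *\<^sub>R m + t *\<^sub>R q"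
      unfolding closed_segment_def by blast
    have "sqrt (c * h q) \<le> sqrt (h p * h q)" "sqrt (c * h q) \<le> sqrt (h q * h q)"
      using assms(2,5,6) by (intro real_sqrt_le_mono mult_right_mono; simp)+
    then have "sqrt (c * h q) \<le> min (h m) (h q)"
      using log_concave_midpoint_ge_sqrt[OF assms(1,2), of p q] assms(2)[of q] unfolding m_def
      by (metis min.boundedI order_trans real_sqrt_abs2 abs_of_nonneg)
    also have "\<dots> \<le> h z"
      using log_concave_min_le[OF assms(1,2) t(1,2)] t(3) by simp
    finally show ?thesis .
  qed
  have [measurable]: "h \<in> borel_measurable borel"
    using assms(3) by auto
  have S_measure: "emeasure lborel S = ennreal (\<bar>q - p\<bar> / 2)"
    by (simp add: S_def m_def midpoint_def min_def max_def abs_if field_simps)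
  have "ennreal (sqrt (c * h q) * (\<bar>q - p\<bar> / 2)) = ennreal (sqrt (c * h q)) * emeasure lborel S"
    unfolding S_measure using assms(2)[of q] assms(4) by (intro ennreal_mult) auto
  also have "\<dots> = (\<integral>\<^sup>+z. ennreal (sqrt (c * h q)) * indicator S z \<partial>lborel)"
    by (rule nn_integral_cmult_indicator[symmetric]) (simp add: S_def)
  also have "\<dots> \<le> (\<integral>\<^sup>+z. ennreal (h z) \<partial>lborel)"
    using above by (intro nn_integral_mono) (auto split: split_indicator intro: ennreal_leI)
  also have "\<dots> = ennreal (integral\<^sup>L lborel h)"
    using assms(2,3) by (intro nn_integral_eq_integral) auto
  finally show ?thesis
    using assms(2) by (simp add: integral_nonneg_AE)
qed

lemma log_concave_integrable_bounded:
  fixes h :: "real \<Rightarrow> real"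
  assumes "log_concave h" "\<And>x. 0 \<le> h x" "integrable lborel h"
  obtains B where "\<And>x. h x \<le> B"
proof (cases "\<exists>p1 p2. p1 \<noteq> p2 \<and> 0 < h p1 \<and> 0 < h p2")
  case False
  define p where "p = (SOME p. 0 < h p)"
  have "h x \<le> max 0 (h p)" for x
    using False someI[of "\<lambda>p. 0 < h p" x] by (cases "0 < h x") (auto simp: p_def)
  then show ?thesis using that by blast
next
  case True
  then obtain p1 p2 where p: "p1 \<noteq> p2" "0 < h p1" "0 < h p2" by blast
  define c where "c = min (h p1) (h p2)"
  define \<delta> where "\<delta> = \<bar>p2 - p1\<bar>"
  define J where "J = integral\<^sup>L lborel h"
  have c: "0 < c" "c \<le> h p1" "c \<le> h p2" and "0 < \<delta>"
    using p by (auto simp: c_def \<delta>_def)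
  have "h q \<le> max c (16 * J\<^sup>2 / (c * \<delta>\<^sup>2))" for q
  proof (cases "h q \<le> c")
    case False
    obtain p where "c \<le> h p" "\<delta> / 2 \<le> \<bar>q - p\<bar>"
    proof (cases "\<delta> / 2 \<le> \<bar>q - p1\<bar>")
      case False
      then have "\<delta> / 2 \<le> \<bar>q - p2\<bar>"
        unfolding \<delta>_def by (simp add: abs_if split: if_splits)
      with c that show ?thesis by blast
    qed (use c in blast)
    then have "sqrt (c * h q) * (\<delta> / 4) \<le> sqrt (c * h q) * (\<bar>q - p\<bar> / 2)"
      using c False by (intro mult_left_mono) auto
    also have "\<dots> \<le> J"
      using log_concave_integral_lower_bound[OF assms, of c p q] \<open>c \<le> h p\<close> False c
      by (simp add: J_def)
    finally have "(sqrt (c * h q) * (\<delta> / 4))\<^sup>2 \<le> J\<^sup>2"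
      using c \<open>0 < \<delta>\<close> False by (intro power_mono) auto
    moreover have "(sqrt (c * h q) * (\<delta> / 4))\<^sup>2 = c * h q * \<delta>\<^sup>2 / 16"
      using c False by (simp add: power_mult_distrib power_divide)
    ultimately have "h q \<le> 16 * J\<^sup>2 / (c * \<delta>\<^sup>2)"
      using c \<open>0 < \<delta>\<close> by (simp add: field_simps)
    then show ?thesis by simp
  qed simp
  then show ?thesis using that by blast
qed

lemma prod_log_concave_mult_le_vmin_vmax:
  fixes g :: "real^'n \<Rightarrow> real" and gi :: "'n \<Rightarrow> real \<Rightarrow> real"
  assumes "\<And>z. g z = (\<Prod>i\<in>UNIV. gi i (z $ i))" "\<And>i. log_concave (gi i)" "\<And>i t. 0 \<le> gi i t"
  shows "g (x - z) * g (y - w) \<le> g (vmin x y - vmin z w) * g (vmax x y - vmax z w)"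
proof -
  have "g (x - z) * g (y - w) = (\<Prod>i\<in>UNIV. gi i (x $ i - z $ i) * gi i (y $ i - w $ i))"
    by (simp add: assms(1) prod.distrib)
  also have "\<dots> \<le> (\<Prod>i\<in>UNIV. gi i (min (x $ i) (y $ i) - min (z $ i) (w $ i)) *
                                gi i (max (x $ i) (y $ i) - max (z $ i) (w $ i)))"
    by (intro prod_mono conjI log_concave_mult_le_min_max[OF assms(2,3)] mult_nonneg_nonneg assms(3))
  also have "\<dots> = g (vmin x y - vmin z w) * g (vmax x y - vmax z w)"
    by (simp add: assms(1) prod.distrib vmin_def vmax_def)
  finally show ?thesis .
qed

lemma conv_eq_nn_integral:
  fixes f g :: "real^'n \<Rightarrow> real"
  assumes [measurable]: "f \<in> borel_measurable borel" "g \<in> borel_measurable borel"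
    and "\<And>x. 0 \<le> f x" "\<And>z. 0 \<le> g z"
  shows "conv f g x = enn2real (\<integral>\<^sup>+w. ennreal (f w * g (x - w)) \<partial>lborel)"
proof -
  have "conv f g x = enn2real (\<integral>\<^sup>+z. ennreal (f (x - z) * g z) \<partial>lborel)"
    unfolding conv_def using assms(3,4) by (intro integral_eq_nn_integral) auto
  also have "(\<integral>\<^sup>+z. ennreal (f (x - z) * g z) \<partial>lborel) = (\<integral>\<^sup>+w. ennreal (f w * g (x - w)) \<partial>lborel)"
    by (subst nn_integral_lborel_reflect[where u=x]) simp_all
  finally show ?thesis .
qed

lemma nn_integral_conv_finite:
  fixes f g :: "real^'n \<Rightarrow> real"
  assumes "integrable lborel f" "\<And>x. 0 \<le> f x"
    and "g \<in> borel_measurable borel" "\<And>z. 0 \<le> g z" "\<And>z. g z \<le> B"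
  shows "(\<integral>\<^sup>+w. ennreal (f w * g (x - w)) \<partial>lborel) < \<infinity>"
proof -
  have "0 \<le> B"
    using assms(4,5) order_trans by blast
  have "(\<integral>\<^sup>+w. ennreal (f w * g (x - w)) \<partial>lborel) \<le> (\<integral>\<^sup>+w. ennreal (B * f w) \<partial>lborel)"
    by (intro nn_integral_mono ennreal_leI) (metis assms(2,5) mult.commute mult_right_mono)
  also have "\<dots> = ennreal B * ennreal (integral\<^sup>L lborel f)"
    using assms(1,2) \<open>0 \<le> B\<close> by (simp add: ennreal_mult nn_integral_cmult nn_integral_eq_integral)
  also have "\<dots> < \<infinity>"
    by (simp add: ennreal_mult_less_top)
  finally show ?thesis .
qed

lemma log_supermodular_conv:
  fixes f g :: "real^'n \<Rightarrow> real"
  assumes f: "integrable lborel f" "\<And>x. 0 \<le> f x" "log_supermodular f"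
    and g: "g \<in> borel_measurable borel" "\<And>z. 0 \<le> g z" "\<And>z. g z \<le> B"
    and kernel: "\<And>x y z w. g (x - z) * g (y - w) \<le> g (vmin x y - vmin z w) * g (vmax x y - vmax z w)"
  shows "log_supermodular (conv f g)"
  unfolding log_supermodular_def
proof (intro allI)
  fix x y :: "real^'n"
  have [measurable]: "f \<in> borel_measurable borel"
    using f(1) by auto
  note g(1)[measurable]
  define N where "N u = (\<integral>\<^sup>+w. ennreal (f w * g (u - w)) \<partial>lborel)" for u
  have conv_N: "conv f g u = enn2real (N u)" for u
    unfolding N_def using f(2) g(2) by (intro conv_eq_nn_integral) auto
  have N_finite: "N u < \<infinity>" for u
    unfolding N_def by (rule nn_integral_conv_finite[OF f(1,2) g])
  have "N x * N y \<le> N (vmin x y) * N (vmax x y)"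
    unfolding N_def
  proof (rule four_functions_lborel_vec)
    fix z w
    have f_lsm: "f z * f w \<le> f (vmin z w) * f (vmax z w)"
      using f(3) unfolding log_supermodular_def by blast
    have "f z * g (x - z) * (f w * g (y - w)) = (f z * f w) * (g (x - z) * g (y - w))"
      by (simp only: ac_simps)
    also have "\<dots> \<le> (f (vmin z w) * f (vmax z w)) * (g (vmin x y - vmin z w) * g (vmax x y - vmax z w))"
      by (rule mult_mono[OF f_lsm kernel]) (simp_all add: f(2) g(2))
    also have "\<dots> = f (vmin z w) * g (vmin x y - vmin z w) * (f (vmax z w) * g (vmax x y - vmax z w))"
      by (simp only: ac_simps)
    finally show "ennreal (f z * g (x - z)) * ennreal (f w * g (y - w))
      \<le> ennreal (f (vmin z w) * g (vmin x y - vmin z w)) * ennreal (f (vmax z w) * g (vmax x y - vmax z w))"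
      using f(2) g(2) by (simp add: ennreal_mult[symmetric] ennreal_leI)
  qed measurable
  then show "conv f g x * conv f g y \<le> conv f g (vmin x y) * conv f g (vmax x y)"
    using N_finite by (simp add: conv_N enn2real_mult[symmetric] enn2real_mono ennreal_mult_less_top)
qed

theorem theorem3p2:
  fixes f g :: "real^'n \<Rightarrow> real" and gi :: "'n \<Rightarrow> real \<Rightarrow> real"
  assumes g_prod: "\<And>z. g z = (\<Prod>i\<in>UNIV. gi i (z $ i))"
    and gi_nonneg: "\<And>i t. gi i t \<ge> 0"
    and gi_lc: "\<And>i. log_concave (gi i)"
    and gi_int: "\<And>i. integrable lborel (gi i)"
    and g_nonzero: "\<exists>z. g z \<noteq> 0"
    and f_pos: "\<And>x. f x > 0"
    and f_int: "integrable lborel f"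
    and f_lsm: "log_supermodular f"
  shows "\<forall>x y. conv f g x * conv f g y \<le> conv f g (vmin x y) * conv f g (vmax x y)"
proof -
  have [measurable]: "gi i \<in> borel_measurable borel" for i
    using gi_int by auto
  have [measurable]: "(\<lambda>z::real^'n. z $ i) \<in> borel_measurable borel" for i
    by (intro borel_measurable_continuous_onI linear_continuous_on bounded_linear_vec_nth)
  have "\<exists>B. \<forall>t. gi i t \<le> B" for i
    using log_concave_integrable_bounded[OF gi_lc gi_nonneg gi_int] by blast
  then obtain Bi where "\<And>i t. gi i t \<le> Bi i"
    by metis
  then have "g z \<le> (\<Prod>i\<in>UNIV. Bi i)" for z
    unfolding g_prod by (intro prod_mono) (auto simp: gi_nonneg)
  moreover have "g \<in> borel_measurable borel"
    unfolding g_prod[abs_def] by measurable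
  moreover have "0 \<le> g z" for z
    unfolding g_prod by (simp add: prod_nonneg gi_nonneg)
  moreover have "g (x - z) * g (y - w) \<le> g (vmin x y - vmin z w) * g (vmax x y - vmax z w)" for x y z w
    using g_prod gi_lc gi_nonneg by (rule prod_log_concave_mult_le_vmin_vmax)
  ultimately have "log_supermodular (conv f g)"
    using f_int f_pos f_lsm by (intro log_supermodular_conv) (auto simp: less_imp_le)
  then show ?thesis
    unfolding log_supermodular_def .
qed

end
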